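(* Let $\mathbf A$ be a regular BBL transformation of bandwidth $(p,q)$, and let $z_1,\dots,z_n$ be the distinct nonzero roots of $\det A(w,w^{-1})$ with multiplicities $s_1,\dots,s_n$. Then the space of square-summable solutions of the half-infinite bulk equation is $$\mathcal M_{1,\infty}\cap\mathcal H=\mathcal F_1^-\oplus\mathbf P_{1,\infty}\bigoplus_{\ell:\,|z_\ell|<1}\big(\ker\mathbf A\cap\mathcal T_{z_\ell,s_\ell}\big).$$
   Context: Fix $d\ge1$, $e_m$ the standard basis of $\mathbb C^d$. $\mathcal V^S_d$: doubly infinite sequences $\Psi=\{\psi_j\}_{j\in\mathbb Z}$, $\psi_j\in\mathbb C^d$. A matrix Laurent polynomial of bandwidth $(p,q)$ is $A(w,w^{-1})=\sum_{r=p}^qa_rw^r$, integers $p\le q$, $a_r$ complex $d\times d$, $a_p\ne0\ne a_q$; its BBL transformation is $(\mathbf A\Psi)_j=\sum_ra_r\psi_{j+r}$; $\mathbf T$ is the left shift $(\mathbf T\Psi)_j=\psi_{j+1}$. $\mathbf A$ is regular if $\det(w^{-p}A(w,w^{-1}))$ is not the zero polynomial. $p'=\min(p,0)$, $q'=\max(0,q)$. $\mathcal V_{L,R}$ = sequences with $\psi_j=0$ for $j\notin[L,R]$, $\mathbf P_{L,R}$ zeroes entries outside $[L,R]$ ($L,R$ possibly infinite). $\mathcal M_{1,\infty}=\ker(\mathbf P_{1-p',\infty}\mathbf A|_{\mathcal V_{1,\infty}})$ (the solutions in $\mathcal V_{1,\infty}$ of the bulk equation of the infinite BBT transformation $\mathbf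 P_{1,\infty}\mathbf A|_{\mathcal V_{1,\infty}}$). $\mathcal F_1^-=\{\Psi\in\mathcal M_{1,\infty}:(\mathbf P_{1,\infty}\mathbf T)^k\Psi=0\text{ for some }k\ge1\}$. For $z\ne0$, $v\ge1$: $\Phi_{z,v}=\{j^{(v-1)}z^{j-v+1}\}_{j\in\mathbb Z}$ with $j^{(0)}=1$, $j^{(k)}=j(j-1)\cdots(j-k+1)$; $\mathcal T_{z,s}=\operatorname{Span}\{\Phi_{z,v}e_m:1\le v\le s,1\le m\le d\}$. $\mathcal H$ is the set of sequences in $\mathcal V_{1,\infty}$ with $\sum_{j\ge1}\|\psi_j\|^2<\infty$. *)

theory Defs
  imports "HOL-Analysis.Analysis" "HOL-Computational_Algebra.Polynomial"
begin

text \<open>Sequences in V^S_d are maps int => complex^'d; the dimension d is the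
cardinality of the finite index type 'd. A matrix Laurent polynomial of
bandwidth (p,q) is given by its coefficient family a :: int => complex^('d::finite)^'d.\<close>

type_synonym 'd seq = "int \<Rightarrow> complex^'d"

definition bbl :: "int \<Rightarrow> int \<Rightarrow> (int \<Rightarrow> complex^('d::finite)^'d) \<Rightarrow> ('d::finite) seq \<Rightarrow> ('d::finite) seq" where
  "bbl p q a \<Psi> = (\<lambda>j. \<Sum>r\<in>{p..q}. a r *v \<Psi> (j + r))"

text \<open>The polynomial matrix w^(-p) A(w,w^(-1)) and its determinant.\<close>
definition symbol_poly_mat :: "int \<Rightarrow> int \<Rightarrow> (int \<Rightarrow> complex^('d::finite)^'d) \<Rightarrow> complex poly^'d^'d" where
  "symbol_poly_mat p q a = (\<chi> i k. \<Sum>r\<in>{p..q}. monom (a r $ i $ k) (nat (r - p)))"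

definition symbol_det :: "int \<Rightarrow> int \<Rightarrow> (int \<Rightarrow> complex^('d::finite)^'d) \<Rightarrow> complex poly" where
  "symbol_det p q a = det (symbol_poly_mat p q a)"

definition regular_bbl :: "int \<Rightarrow> int \<Rightarrow> (int \<Rightarrow> complex^('d::finite)^'d) \<Rightarrow> bool" where
  "regular_bbl p q a \<longleftrightarrow> symbol_det p q a \<noteq> 0"

definition is_laurent_bandwidth :: "int \<Rightarrow> int \<Rightarrow> (int \<Rightarrow> complex^('d::finite)^'d) \<Rightarrow> bool" where
  "is_laurent_bandwidth p q a \<longleftrightarrow> p \<le> q \<and> a p \<noteq> 0 \<and> a q \<noteq> 0 \<and> (\<forall>r. (r < p \<or> q < r) \<longrightarrow> a r = 0)"

definition nonzero_roots :: "int \<Rightarrow> int \<Rightarrow> (int \<Rightarrow> complex^('d::finite)^'d) \<Rightarrow> complex set" where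
  "nonzero_roots p q a = {z. z \<noteq> 0 \<and> poly (symbol_det p q a) z = 0}"

definition root_mult :: "int \<Rightarrow> int \<Rightarrow> (int \<Rightarrow> complex^('d::finite)^'d) \<Rightarrow> complex \<Rightarrow> nat" where
  "root_mult p q a z = order z (symbol_det p q a)"

definition proj :: "int \<Rightarrow> ('d::finite) seq \<Rightarrow> ('d::finite) seq" where
  "proj L \<Psi> = (\<lambda>j. if L \<le> j then \<Psi> j else 0)"

definition shiftT :: "('d::finite) seq \<Rightarrow> ('d::finite) seq" where
  "shiftT \<Psi> = (\<lambda>j. \<Psi> (j + 1))"

definition V1inf :: "('d::finite) seq set" where
  "V1inf = {\<Psi>. \<forall>j<1. \<Psi> j = 0}"

definition M1inf :: "int \<Rightarrow> int \<Rightarrow> (int \<Rightarrow> complex^('d::finite)^'d) \<Rightarrow> ('d::finite) seq set" where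
  "M1inf p q a = {\<Psi> \<in> V1inf. proj (1 - min p 0) (bbl p q a \<Psi>) = (\<lambda>_. 0)}"

definition F1minus :: "int \<Rightarrow> int \<Rightarrow> (int \<Rightarrow> complex^('d::finite)^'d) \<Rightarrow> ('d::finite) seq set" where
  "F1minus p q a = {\<Psi> \<in> M1inf p q a. \<exists>k\<ge>1. ((proj 1 \<circ> shiftT) ^^ k) \<Psi> = (\<lambda>_. 0)}"

definition Hsq :: "('d::finite) seq set" where
  "Hsq = {\<Psi> \<in> V1inf. summable (\<lambda>n::nat. (norm (\<Psi> (int n + 1)))\<^sup>2)}"

definition kerA :: "int \<Rightarrow> int \<Rightarrow> (int \<Rightarrow> complex^('d::finite)^'d) \<Rightarrow> ('d::finite) seq set" where
  "kerA p q a = {\<Psi>. bbl p q a \<Psi> = (\<lambda>_. 0)}"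

definition ffact_int :: "int \<Rightarrow> nat \<Rightarrow> complex" where
  "ffact_int j k = (\<Prod>i<k. of_int j - of_nat i)"

definition Phi :: "complex \<Rightarrow> nat \<Rightarrow> int \<Rightarrow> complex" where
  "Phi z v j = ffact_int j (v - 1) * z powi (j - int v + 1)"

definition Tspace :: "complex \<Rightarrow> nat \<Rightarrow> ('d::finite) seq set" where
  "Tspace z s = {\<Psi>. \<exists>c :: nat \<Rightarrow> 'd \<Rightarrow> complex.
      \<Psi> = (\<lambda>j. \<Sum>v\<in>{1..s}. \<Sum>m\<in>UNIV. axis m (c v m * Phi z v j))}"

end

theory Submission
  imports Defs "HOL-Computational_Algebra.Field_as_Ring" "HOL-Computational_Algebra.Polynomial_Factorial"
    "HOL-Computational_Algebra.Fundamental_Theorem_Algebra"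
begin

text \<open>Write P(T) for a polynomial P in the left shift T. Multiplying the bulk equation by the
  adjugate of the symbol (Cramer's rule), det A(T) annihilates every coordinate of a solution from
  some index on. Factoring det A(w) = c \<Prod> (w - z)^(s_z) and using Bezout identities between
  the coprime factors, such a solution is eventually a sum of generalized eigensequences, one in
  T_{z,s_z} for each nonzero root z; the factor w^(s_0) only affects finitely many entries. The
  Bezout projections commute with A, so each summand lies in ker A. A nonzero generalized
  eigensequence for |z| \<ge> 1 does not decay, so square summability removes these roots, and what
  is left after subtracting the truncated stable summands vanishes eventually, i.e. lies in
  F_1^-. The same projections show that the sum is direct.\<close>

definition poly_shift_op :: "'a::comm_ring_1 poly \<Rightarrow> (int \<Rightarrow> 'a) \<Rightarrow> int \<Rightarrow> 'a" where
  "poly_shift_op P u = (\<lambda>j. \<Sum>k\<le>degree P. coeff P k * u (j + int k))"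

lemma poly_shift_op_eq_sum_atMost:
  assumes "degree P \<le> N"
  shows "poly_shift_op P u j = (\<Sum>k\<le>N. coeff P k * u (j + int k))"
proof -
  have "(\<Sum>k\<le>N. coeff P k * u (j + int k)) = (\<Sum>k\<le>degree P. coeff P k * u (j + int k))"
    by (rule sum.mono_neutral_right) (use assms in \<open>auto intro: le_degree\<close>)
  then show ?thesis by (simp add: poly_shift_op_def)
qed

lemma poly_shift_op_0 [simp]: "poly_shift_op 0 u = (\<lambda>_. 0)"
  by (simp add: poly_shift_op_def)

lemma poly_shift_op_1 [simp]: "poly_shift_op 1 u = u"
  by (simp add: poly_shift_op_def)

lemma poly_shift_op_add: "poly_shift_op (P + Q) u = (\<lambda>j. poly_shift_op P u j + poly_shift_op Q u j)"
proof
  fix j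
  let ?N = "max (degree P) (degree Q)"
  have "degree (P + Q) \<le> ?N" by (rule degree_add_le) auto
  then show "poly_shift_op (P + Q) u j = poly_shift_op P u j + poly_shift_op Q u j"
    by (simp add: poly_shift_op_eq_sum_atMost[of _ ?N] sum.distrib distrib_right)
qed

lemma poly_shift_op_smult: "poly_shift_op (smult c P) u = (\<lambda>j. c * poly_shift_op P u j)"
  by (rule ext, subst poly_shift_op_eq_sum_atMost[of _ "degree P"])
    (auto simp: poly_shift_op_def sum_distrib_left mult.assoc degree_smult_le)

lemma poly_shift_op_pCons: "poly_shift_op (pCons c P) u j = c * u j + poly_shift_op P u (j + 1)"
proof -
  have "poly_shift_op (pCons c P) u j = (\<Sum>k\<le>Suc (degree P). coeff (pCons c P) k * u (j + int k))"
    by (rule poly_shift_op_eq_sum_atMost) (simp add: degree_pCons_le)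
  also have "\<dots> = c * u j + (\<Sum>k\<le>degree P. coeff P k * u (j + 1 + int k))"
    by (subst sum.atMost_Suc_shift) (simp add: algebra_simps)
  finally show ?thesis by (simp add: poly_shift_op_def)
qed

lemma poly_shift_op_mult: "poly_shift_op (P * Q) u = poly_shift_op P (poly_shift_op Q u)"
proof (induction P arbitrary: u)
  case 0
  then show ?case by simp
next
  case (pCons c P)
  have "poly_shift_op (pCons c P * Q) u = poly_shift_op (smult c Q + pCons 0 (P * Q)) u"
    by simp
  also have "\<dots> = (\<lambda>j. c * poly_shift_op Q u j + poly_shift_op P (poly_shift_op Q u) (j + 1))"
    by (auto simp: poly_shift_op_add poly_shift_op_smult poly_shift_op_pCons pCons.IH)
  also have "\<dots> = poly_shift_op (pCons c P) (poly_shift_op Q u)"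
    by (auto simp: poly_shift_op_pCons)
  finally show ?case .
qed

lemma poly_shift_op_monom: "poly_shift_op (monom c n) u = (\<lambda>j. c * u (j + int n))"
proof
  fix j
  have "poly_shift_op (monom c n) u j = (\<Sum>k\<le>n. coeff (monom c n) k * u (j + int k))"
    by (rule poly_shift_op_eq_sum_atMost) (simp add: degree_monom_le)
  also have "\<dots> = (\<Sum>k\<le>n. if k = n then c * u (j + int k) else 0)"
    by (rule sum.cong) (auto simp: coeff_monom)
  also have "\<dots> = c * u (j + int n)"
    by simp
  finally show "poly_shift_op (monom c n) u j = c * u (j + int n)" .
qed

lemma poly_shift_op_sum: "poly_shift_op (\<Sum>x\<in>S. F x) u = (\<lambda>j. \<Sum>x\<in>S. poly_shift_op (F x) u j)"
  by (induction S rule: infinite_finite_induct) (simp_all add: poly_shift_op_add)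

lemma poly_shift_op_zero_seq [simp]: "poly_shift_op P (\<lambda>_. 0) = (\<lambda>_. 0)"
  by (simp add: poly_shift_op_def)

lemma poly_shift_op_diff_seq: "poly_shift_op P (\<lambda>j. u j - v j) = (\<lambda>j. poly_shift_op P u j - poly_shift_op P v j)"
  by (auto simp: poly_shift_op_def sum_subtractf right_diff_distrib)

lemma poly_shift_op_cmult_seq: "poly_shift_op P (\<lambda>j. c * u j) = (\<lambda>j. c * poly_shift_op P u j)"
  by (auto simp: poly_shift_op_def sum_distrib_left ac_simps)

lemma poly_shift_op_sum_seq: "poly_shift_op P (\<lambda>j. \<Sum>x\<in>S. f x j) = (\<lambda>j. \<Sum>x\<in>S. poly_shift_op P (f x) j)"
  by (auto simp: poly_shift_op_def sum_distrib_left intro!: sum.swap)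

lemma poly_shift_op_translate: "poly_shift_op P (\<lambda>j. u (j + r)) = (\<lambda>j. poly_shift_op P u (j + r))"
  by (auto simp: poly_shift_op_def ac_simps)

lemma poly_shift_op_eventually_zero:
  "\<forall>j\<ge>J. u j = 0 \<Longrightarrow> \<forall>j\<ge>J. poly_shift_op P u j = 0"
  by (auto simp: poly_shift_op_def intro!: sum.neutral)

lemma poly_shift_op_tendsto_zero:
  fixes u :: "int \<Rightarrow> 'a::{real_normed_algebra, comm_ring_1}"
  assumes "(\<lambda>n::nat. u (int n)) \<longlonglongrightarrow> 0"
  shows "(\<lambda>n::nat. poly_shift_op P u (int n)) \<longlonglongrightarrow> 0"
proof -
  have "(\<lambda>n::nat. u (int n + int k)) \<longlonglongrightarrow> 0" for k
    using LIMSEQ_ignore_initial_segment[OF assms, of k] by (simp add: add.commute)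
  then have "(\<lambda>n::nat. \<Sum>k\<le>degree P. coeff P k * u (int n + int k))
      \<longlonglongrightarrow> (\<Sum>k\<le>degree P. coeff P k * 0)"
    by (intro tendsto_sum tendsto_mult tendsto_const)
  then show ?thesis by (simp add: poly_shift_op_def)
qed

text \<open>As coeff P 0 \<noteq> 0, P(T) u = 0 determines each u j from later values.\<close>
lemma poly_shift_op_kernel_eventually_zero:
  fixes u :: "int \<Rightarrow> 'a::idom"
  assumes zero_from: "\<forall>j\<ge>J. u j = 0" and ker: "\<forall>j. poly_shift_op P u j = 0"
    and coeff0: "coeff P 0 \<noteq> 0"
  shows "u j = 0"
proof -
  obtain c P' where P: "P = pCons c P'" by (cases P) auto
  have c: "c \<noteq> 0" using coeff0 P by simp
  have "\<forall>j\<ge>J - int n. u j = 0" for n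
  proof (induction n)
    case 0
    then show ?case using zero_from by simp
  next
    case (Suc n)
    show ?case
    proof (intro allI impI)
      fix j assume j: "J - int (Suc n) \<le> j"
      show "u j = 0"
      proof (cases "J - int n \<le> j")
        case True
        then show ?thesis using Suc by simp
      next
        case False
        then have "\<forall>t\<ge>j + 1. u t = 0" using Suc j by auto
        then have "poly_shift_op P' u (j + 1) = 0" using poly_shift_op_eventually_zero by blast
        then show ?thesis using ker[rule_format, of j] c by (simp add: P poly_shift_op_pCons)
      qed
    qed
  qed
  from this[of "nat (J - j)"] show ?thesis by simp
qed

abbreviation root_factor :: "'a::comm_ring_1 \<Rightarrow> 'a poly" where
  "root_factor z \<equiv> [:-z, 1:]"

lemma poly_shift_op_root_factor: "poly_shift_op (root_factor z) u j = u (j + 1) - z * u j"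
  by (simp add: poly_shift_op_pCons poly_shift_op_def)

lemma root_factor_kernel_from:
  fixes z :: "'a::field"
  assumes z: "z \<noteq> 0" and ker: "\<forall>j\<ge>J. poly_shift_op (root_factor z) u j = 0" and j: "J \<le> j"
  shows "u j = u J * z powi (j - J)"
proof -
  have "u (J + int n) = u J * z ^ n" for n
  proof (induction n)
    case (Suc n)
    have "u (J + int n + 1) = z * u (J + int n)"
      using ker[rule_format, of "J + int n"] by (simp add: poly_shift_op_root_factor)
    then show ?case using Suc by (simp add: algebra_simps)
  qed simp
  from this[of "nat (j - J)"] show ?thesis using j by (simp add: power_int_def)
qed

lemma root_factor_kernel:
  fixes z :: "'a::field"
  assumes z: "z \<noteq> 0" and ker: "\<forall>j. poly_shift_op (root_factor z) u j = 0"
  shows "u j = u 0 * z powi j"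
proof -
  define J where "J = min j 0"
  have "\<forall>j'\<ge>J. poly_shift_op (root_factor z) u j' = 0" using ker by blast
  then have "u j = u J * z powi (j - J)" "u 0 = u J * z powi (0 - J)"
    using root_factor_kernel_from[OF z] unfolding J_def by (metis min.cobounded1, metis min.cobounded2)
  then show ?thesis using z by (simp add: power_int_diff power_int_minus divide_inverse ac_simps)
qed

lemma root_factor_power_kernel_eventually_zero:
  fixes u :: "int \<Rightarrow> 'a::idom"
  assumes "\<forall>j. poly_shift_op (root_factor z ^ s) u j = 0" and "z \<noteq> 0" and "\<forall>j\<ge>J. u j = 0"
  shows "u j = 0"
  using poly_shift_op_kernel_eventually_zero[OF assms(3,1)] assms(2) by (simp add: coeff_0_power)

text \<open>A solution of (T - z)^s u = 0 with |z| \<ge> 1 cannot decay: the sequence (T - z)^(s-1) u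
  is geometric with ratio z, and it decays as well.\<close>
lemma root_factor_power_kernel_tendsto_zero:
  fixes u :: "int \<Rightarrow> 'a::real_normed_field"
  assumes "\<forall>j. poly_shift_op (root_factor z ^ s) u j = 0" and z: "1 \<le> norm z"
    and "(\<lambda>n::nat. u (int n)) \<longlonglongrightarrow> 0"
  shows "u j = 0"
  using assms(1,3)
proof (induction s arbitrary: u j)
  case 0
  then show ?case by simp
next
  case (Suc s)
  define v where "v = poly_shift_op (root_factor z ^ s) u"
  have "\<forall>j. poly_shift_op (root_factor z) v j = 0"
    using Suc.prems(1) by (simp add: v_def poly_shift_op_mult[symmetric] mult.commute)
  then have v_geom: "v j = v 0 * z powi j" for j
    using root_factor_kernel[of z v j] z by force
  have "(\<lambda>n::nat. v (int n)) \<longlonglongrightarrow> 0"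
    unfolding v_def by (rule poly_shift_op_tendsto_zero[OF Suc.prems(2)])
  then have lim: "(\<lambda>n::nat. norm (v (int n))) \<longlonglongrightarrow> 0" by (rule tendsto_norm_zero)
  have "norm (v 0) \<le> norm (v (int n))" for n
  proof -
    have "norm (v (int n)) = norm (v 0) * norm z ^ n"
      using v_geom[of "int n"] by (simp add: norm_mult norm_power)
    moreover have "1 \<le> norm z ^ n" using z by (rule one_le_power)
    ultimately show ?thesis using mult_left_mono[of 1 "norm z ^ n" "norm (v 0)"] by simp
  qed
  then have "v 0 = 0" using LIMSEQ_le_const[OF lim, of "norm (v 0)"] by auto
  then have "\<forall>j. poly_shift_op (root_factor z ^ s) u j = 0" using v_geom by (simp add: v_def)
  then show ?case using Suc.IH Suc.prems(2) by blast
qed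

lemma ffact_int_Suc: "ffact_int j (Suc k) = ffact_int j k * (of_int j - of_nat k)"
  by (simp add: ffact_int_def)

lemma ffact_int_Suc_shift: "ffact_int (j + 1) (Suc k) = (of_int j + 1) * ffact_int j k"
  unfolding ffact_int_def by (subst prod.lessThan_Suc_shift) (simp add: algebra_simps)

lemma Phi_1: "Phi z 1 j = z powi j"
  by (simp add: Phi_def ffact_int_def)

lemma poly_shift_op_root_factor_Phi_1: "z \<noteq> 0 \<Longrightarrow> poly_shift_op (root_factor z) (Phi z 1) j = 0"
  by (simp only: poly_shift_op_root_factor Phi_1) (simp add: power_int_add)

lemma poly_shift_op_root_factor_Phi_Suc:
  assumes z: "z \<noteq> 0"
  shows "poly_shift_op (root_factor z) (Phi z (Suc (Suc k))) j = of_nat (Suc k) * Phi z (Suc k) j"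
proof -
  have "j - int k = (j - int (Suc (Suc k)) + 1) + 1"
    by simp
  then have shift: "z * z powi (j - int (Suc (Suc k)) + 1) = z powi (j - int k)"
    by (simp only: power_int_add_1'[OF disjI1[OF z]])
  have "j + 1 - int (Suc (Suc k)) + 1 = j - int k"
    by simp
  then have "poly_shift_op (root_factor z) (Phi z (Suc (Suc k))) j
      = ffact_int (j + 1) (Suc k) * z powi (j - int k) - ffact_int j (Suc k) * z powi (j - int k)"
    unfolding poly_shift_op_root_factor Phi_def using shift by (simp add: algebra_simps)
  also have "\<dots> = of_nat (Suc k) * (ffact_int j k * z powi (j - int k))"
    by (subst ffact_int_Suc_shift, subst ffact_int_Suc, simp add: algebra_simps)
  also have "\<dots> = of_nat (Suc k) * Phi z (Suc k) j"
    by (simp add: Phi_def)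
  finally show ?thesis .
qed

definition Phi_comb :: "complex \<Rightarrow> nat \<Rightarrow> (nat \<Rightarrow> complex) \<Rightarrow> int \<Rightarrow> complex" where
  "Phi_comb z s c j = (\<Sum>v\<in>{1..s}. c v * Phi z v j)"

lemma poly_shift_op_root_factor_Phi_comb:
  assumes z: "z \<noteq> 0"
  shows "poly_shift_op (root_factor z) (Phi_comb z (Suc s) c) = Phi_comb z s (\<lambda>v. c (Suc v) * of_nat v)"
proof
  fix j
  have lower: "c (Suc v) * poly_shift_op (root_factor z) (Phi z (Suc v)) j = c (Suc v) * of_nat v * Phi z v j"
    if "v \<in> {1..s}" for v
    using that poly_shift_op_root_factor_Phi_Suc[OF z, of "v - 1" j] by (cases v) auto
  have "poly_shift_op (root_factor z) (Phi_comb z (Suc s) c) j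
      = (\<Sum>v\<in>{1..Suc s}. c v * poly_shift_op (root_factor z) (Phi z v) j)"
    unfolding Phi_comb_def[abs_def] poly_shift_op_sum_seq poly_shift_op_cmult_seq ..
  also have "\<dots> = c 1 * poly_shift_op (root_factor z) (Phi z 1) j
      + (\<Sum>v\<in>{1..s}. c (Suc v) * poly_shift_op (root_factor z) (Phi z (Suc v)) j)"
    by (subst sum.atLeast_Suc_atMost[of 1 "Suc s"], simp, subst sum.shift_bounds_cl_Suc_ivl[symmetric], simp)
  also have "(\<Sum>v\<in>{1..s}. c (Suc v) * poly_shift_op (root_factor z) (Phi z (Suc v)) j)
      = (\<Sum>v\<in>{1..s}. c (Suc v) * of_nat v * Phi z v j)"
    by (rule sum.cong[OF refl lower])
  also have "c 1 * poly_shift_op (root_factor z) (Phi z 1) j + (\<Sum>v\<in>{1..s}. c (Suc v) * of_nat v * Phi z v j)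
      = Phi_comb z s (\<lambda>v. c (Suc v) * of_nat v) j"
    using poly_shift_op_root_factor_Phi_1[OF z, of j] by (simp add: Phi_comb_def)
  finally show "poly_shift_op (root_factor z) (Phi_comb z (Suc s) c) j = Phi_comb z s (\<lambda>v. c (Suc v) * of_nat v) j" .
qed

lemma poly_shift_op_root_factor_power_Phi_comb:
  assumes "z \<noteq> 0"
  shows "poly_shift_op (root_factor z ^ s) (Phi_comb z s c) j = 0"
proof (induction s arbitrary: c j)
  case 0
  then show ?case by (simp add: Phi_comb_def)
next
  case (Suc s)
  have "poly_shift_op (root_factor z ^ Suc s) (Phi_comb z (Suc s) c)
      = poly_shift_op (root_factor z ^ s) (Phi_comb z s (\<lambda>v. c (Suc v) * of_nat v))"
    by (simp only: power_Suc2 poly_shift_op_mult poly_shift_op_root_factor_Phi_comb[OF assms])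
  then show ?case using Suc.IH by simp
qed

text \<open>The coefficient of Phi z 1 is the junk value c 0 / 0 = 0; it does not matter because
  Phi z 1 lies in the kernel of T - z.\<close>
lemma Phi_comb_antidifference:
  assumes "z \<noteq> 0"
  shows "poly_shift_op (root_factor z) (Phi_comb z (Suc s) (\<lambda>v. c (v - 1) / of_nat (v - 1)))
    = Phi_comb z s c"
proof -
  have "c v / of_nat v * of_nat v = c v" if "v \<in> {1..s}" for v
    using that by simp
  then show ?thesis
    unfolding poly_shift_op_root_factor_Phi_comb[OF assms] by (auto simp: Phi_comb_def intro!: ext sum.cong)
qed

lemma Phi_comb_update_1:
  "Phi_comb z (Suc s) (c(1 := d)) j = Phi_comb z (Suc s) c j + (d - c 1) * Phi z 1 j"
proof -
  have "Phi_comb z (Suc s) c' j = c' 1 * Phi z 1 j + (\<Sum>v\<in>{Suc 1..Suc s}. c' v * Phi z v j)" for c'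
    unfolding Phi_comb_def by (rule sum.atLeast_Suc_atMost) simp
  then show ?thesis by (simp add: algebra_simps)
qed

text \<open>The induction step integrates once with the explicit antidifference above; the remaining
  solution of (T - z) w = 0 is a multiple of Phi z 1.\<close>
lemma root_factor_power_eventual_kernel:
  assumes z: "z \<noteq> 0"
  shows "\<forall>j\<ge>J. poly_shift_op (root_factor z ^ s) u j = 0 \<Longrightarrow> \<exists>c. \<forall>j\<ge>J. u j = Phi_comb z s c j"
proof (induction s arbitrary: u)
  case 0
  then show ?case by (simp add: Phi_comb_def)
next
  case (Suc s)
  have "\<forall>j\<ge>J. poly_shift_op (root_factor z ^ s) (poly_shift_op (root_factor z) u) j = 0"
    using Suc.prems by (simp only: power_Suc2 poly_shift_op_mult)
  then obtain c where c: "\<forall>j\<ge>J. poly_shift_op (root_factor z) u j = Phi_comb z s c j"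
    using Suc.IH by blast
  define c' where "c' = (\<lambda>v. c (v - 1) / of_nat (v - 1))"
  define w where "w = (\<lambda>j. u j - Phi_comb z (Suc s) c' j)"
  have w_ker: "\<forall>j\<ge>J. poly_shift_op (root_factor z) w j = 0"
    using c Phi_comb_antidifference[OF z, of s c]
    unfolding w_def c'_def poly_shift_op_diff_seq by simp
  define d where "d = w J * z powi (- J)"
  have "w j = d * Phi z 1 j" if "J \<le> j" for j
  proof -
    have "w j = w J * z powi (j - J)"
      by (rule root_factor_kernel_from[OF z w_ker that])
    also have "z powi (j - J) = z powi (- J) * z powi j"
      using z by (simp add: power_int_diff power_int_minus divide_inverse mult.commute)
    finally show ?thesis by (simp add: d_def Phi_def ffact_int_def)
  qed
  then have "\<forall>j\<ge>J. u j = Phi_comb z (Suc s) (c'(1 := c' 1 + d)) j"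
    unfolding Phi_comb_update_1 by (simp add: w_def algebra_simps)
  then show ?case by blast
qed

lemma coprime_root_factor_powers:
  fixes a b :: complex
  assumes "a \<noteq> b"
  shows "coprime (root_factor a ^ m) (root_factor b ^ n)"
proof -
  have "coprime (root_factor a) (root_factor b)"
  proof (rule coprimeI)
    fix c assume a: "c dvd root_factor a" and b: "c dvd root_factor b"
    have "root_factor a - root_factor b = [:b - a:]"
      by simp
    then have "c dvd [:b - a:]"
      using dvd_diff[OF a b] by simp
    moreover have "is_unit [:b - a:]"
      using assms by (simp add: is_unit_const_poly_iff dvd_field_iff)
    ultimately show "is_unit c" by (rule dvd_unit_imp_unit)
  qed
  then show ?thesis by simp
qed

lemma coprime_poly_bezout:
  fixes F G :: "complex poly"
  assumes "coprime F G"
  obtains \<alpha> \<beta> where "\<alpha> * F + \<beta> * G = 1"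
  using bezout_coefficients_fst_snd[of F G] assms that by (metis coprime_imp_gcd_eq_1)

lemma root_factor_power_prod_bezout:
  fixes z0 :: complex
  assumes "z0 \<notin> Z"
  obtains \<alpha> \<beta> where "\<alpha> * root_factor z0 ^ m + \<beta> * (\<Prod>z\<in>Z. root_factor z ^ s z) = 1"
proof (rule coprime_poly_bezout)
  show "coprime (root_factor z0 ^ m) (\<Prod>z\<in>Z. root_factor z ^ s z)"
  proof (rule prod_coprime_right)
    fix z assume "z \<in> Z"
    then show "coprime (root_factor z0 ^ m) (root_factor z ^ s z)"
      using assms by (intro coprime_root_factor_powers) auto
  qed
qed

text \<open>For pairwise coprime factors, each summand of a sum of kernel elements is recovered by a
  Bezout polynomial applied to the sum.\<close>
lemma root_factor_kernels_projection:
  fixes s :: "complex \<Rightarrow> nat"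
  assumes fin: "finite Z" and z0: "z0 \<in> Z"
  obtains R where "\<And>g. \<forall>z\<in>Z. \<forall>j. poly_shift_op (root_factor z ^ s z) (g z) j = 0
    \<Longrightarrow> g z0 = poly_shift_op R (\<lambda>j. \<Sum>z\<in>Z. g z j)"
proof -
  define G where "G = (\<Prod>z\<in>Z - {z0}. root_factor z ^ s z)"
  obtain \<alpha> \<beta> where bezout: "\<alpha> * root_factor z0 ^ s z0 + \<beta> * G = 1"
    using root_factor_power_prod_bezout[of z0 "Z - {z0}"] unfolding G_def by blast
  have "g z0 = poly_shift_op (\<beta> * G) (\<lambda>j. \<Sum>z\<in>Z. g z j)"
    if g: "\<forall>z\<in>Z. \<forall>j. poly_shift_op (root_factor z ^ s z) (g z) j = 0" for g
  proof -
    have ker: "poly_shift_op (root_factor z ^ s z) (g z) = (\<lambda>_. 0)" if "z \<in> Z" for z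
      using g that by auto
    have other: "poly_shift_op (\<beta> * G) (g z) = (\<lambda>_. 0)" if z: "z \<in> Z - {z0}" for z
    proof -
      have "\<beta> * G = (\<beta> * (\<Prod>z\<in>Z - {z0} - {z}. root_factor z ^ s z)) * root_factor z ^ s z"
        unfolding G_def using z fin by (simp add: prod.remove ac_simps)
      then show ?thesis using ker z by (simp only: poly_shift_op_mult) simp
    qed
    have "poly_shift_op (\<alpha> * root_factor z0 ^ s z0) (g z0) = (\<lambda>_. 0)"
      using ker[OF z0] by (simp add: poly_shift_op_mult)
    then have self: "poly_shift_op (\<beta> * G) (g z0) = g z0"
      using arg_cong[OF bezout, of "\<lambda>P. poly_shift_op P (g z0)"] by (simp add: poly_shift_op_add)
    have "poly_shift_op (\<beta> * G) (\<lambda>j. \<Sum>z\<in>Z. g z j)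
        = (\<lambda>j. poly_shift_op (\<beta> * G) (g z0) j + (\<Sum>z\<in>Z - {z0}. poly_shift_op (\<beta> * G) (g z) j))"
      by (simp only: poly_shift_op_sum_seq) (simp add: sum.remove[OF fin z0])
    then show ?thesis using other self by simp
  qed
  then show ?thesis using that by blast
qed

lemma root_factor_power_prod_eventual_kernel:
  fixes s :: "complex \<Rightarrow> nat"
  assumes "finite Z"
  shows "\<forall>j\<ge>J. poly_shift_op (\<Prod>z\<in>Z. root_factor z ^ s z) u j = 0 \<Longrightarrow>
    \<exists>g. (\<forall>z\<in>Z. \<forall>j\<ge>J. poly_shift_op (root_factor z ^ s z) (g z) j = 0) \<and> (\<forall>j\<ge>J. u j = (\<Sum>z\<in>Z. g z j))"
  using assms
proof (induction Z arbitrary: u rule: finite_induct)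
  case empty
  then show ?case by simp
next
  case (insert z0 Z)
  define F where "F = root_factor z0 ^ s z0"
  define G where "G = (\<Prod>z\<in>Z. root_factor z ^ s z)"
  obtain \<alpha> \<beta> where bezout: "\<alpha> * F + \<beta> * G = 1"
    using root_factor_power_prod_bezout[OF insert.hyps(2)] unfolding F_def G_def by blast
  have FG: "\<forall>j\<ge>J. poly_shift_op (F * G) u j = 0"
    using insert by (simp add: F_def G_def)
  have "poly_shift_op F (poly_shift_op (\<beta> * G) u) = poly_shift_op \<beta> (poly_shift_op (F * G) u)"
    by (simp only: poly_shift_op_mult[symmetric] ac_simps)
  then have F_part: "\<forall>j\<ge>J. poly_shift_op F (poly_shift_op (\<beta> * G) u) j = 0"
    using poly_shift_op_eventually_zero[OF FG] by simp
  have "poly_shift_op G (poly_shift_op (\<alpha> * F) u) = poly_shift_op \<alpha> (poly_shift_op (F * G) u)"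
    by (simp only: poly_shift_op_mult[symmetric] ac_simps)
  then have "\<forall>j\<ge>J. poly_shift_op G (poly_shift_op (\<alpha> * F) u) j = 0"
    using poly_shift_op_eventually_zero[OF FG] by simp
  then obtain g where g: "\<forall>z\<in>Z. \<forall>j\<ge>J. poly_shift_op (root_factor z ^ s z) (g z) j = 0"
    and g_sum: "\<forall>j\<ge>J. poly_shift_op (\<alpha> * F) u j = (\<Sum>z\<in>Z. g z j)"
    using insert.IH unfolding G_def by blast
  have split: "u j = poly_shift_op (\<beta> * G) u j + poly_shift_op (\<alpha> * F) u j" for j
    using arg_cong[OF bezout, of "\<lambda>P. poly_shift_op P u j"] by (simp add: poly_shift_op_add add.commute)
  define g' where "g' = g(z0 := poly_shift_op (\<beta> * G) u)"
  have "(\<Sum>z\<in>Z. g' z j) = (\<Sum>z\<in>Z. g z j)" for j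
    using insert.hyps(2) by (intro sum.cong) (auto simp: g'_def)
  then have "\<forall>j\<ge>J. u j = (\<Sum>z\<in>insert z0 Z. g' z j)"
    using insert.hyps g_sum split by (simp add: g'_def)
  moreover have "\<forall>z\<in>insert z0 Z. \<forall>j\<ge>J. poly_shift_op (root_factor z ^ s z) (g' z) j = 0"
    using g F_part insert.hyps(2) by (auto simp: g'_def F_def)
  ultimately show ?case by blast
qed

text \<open>Solutions of a linear recurrence with constant coefficients: factor D over its roots,
  decompose along the factors, and note that the factor for the root 0 is a pure shift.\<close>
lemma recurrence_eventual_solution:
  fixes D :: "complex poly"
  assumes D: "D \<noteq> 0" and ker: "\<forall>j\<ge>J. poly_shift_op D u j = 0"
  shows "\<exists>c. \<forall>j\<ge>J + int (order 0 D).
    u j = (\<Sum>z\<in>{z. z \<noteq> 0 \<and> poly D z = 0}. Phi_comb z (order z D) (c z) j)"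
proof -
  define Rt where "Rt = {z. poly D z = 0}"
  define s where "s = (\<lambda>z. order z D)"
  have fin: "finite Rt" unfolding Rt_def using D by (rule poly_roots_finite)
  define P where "P = (\<Prod>z\<in>Rt. root_factor z ^ s z)"
  have dec: "smult (lead_coeff D) P = D"
    unfolding P_def Rt_def s_def by (rule complex_poly_decompose)
  have "poly_shift_op D u j = lead_coeff D * poly_shift_op P u j" for j
    using arg_cong[OF dec, of "\<lambda>Q. poly_shift_op Q u j"] by (simp add: poly_shift_op_smult)
  then have "\<forall>j\<ge>J. poly_shift_op (\<Prod>z\<in>Rt. root_factor z ^ s z) u j = 0"
    using ker D by (simp add: P_def)
  then obtain g where g: "\<forall>z\<in>Rt. \<forall>j\<ge>J. poly_shift_op (root_factor z ^ s z) (g z) j = 0"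
    and u: "\<forall>j\<ge>J. u j = (\<Sum>z\<in>Rt. g z j)"
    using root_factor_power_prod_eventual_kernel[OF fin] by blast
  have "\<exists>c. \<forall>j\<ge>J. g z j = Phi_comb z (s z) c j" if "z \<in> Rt - {0}" for z
    using that g by (intro root_factor_power_eventual_kernel) auto
  then obtain c where c: "\<And>z. z \<in> Rt - {0} \<Longrightarrow> \<forall>j\<ge>J. g z j = Phi_comb z (s z) (c z) j"
    by metis
  have g0: "g 0 j = 0" if "0 \<in> Rt" "J + int (s 0) \<le> j" for j
  proof -
    have "g 0 j = poly_shift_op (monom 1 (s 0)) (g 0) (j - int (s 0))"
      by (simp add: poly_shift_op_monom)
    also have "monom 1 (s 0) = root_factor (0::complex) ^ s 0"
      by (simp only: monom_altdef smult_1_left minus_zero)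
    also have "poly_shift_op (root_factor 0 ^ s 0) (g 0) (j - int (s 0)) = 0"
      using bspec[OF g that(1)] that(2) by simp
    finally show ?thesis .
  qed
  have "u j = (\<Sum>z\<in>{z. z \<noteq> 0 \<and> poly D z = 0}. Phi_comb z (order z D) (c z) j)"
    if j: "J + int (s 0) \<le> j" for j
  proof -
    have "u j = (\<Sum>z\<in>Rt - {0}. g z j)"
    proof (cases "0 \<in> Rt")
      case True
      then show ?thesis using u j g0 by (simp add: sum.remove[OF fin True])
    next
      case False
      then show ?thesis using u j by simp
    qed
    also have "\<dots> = (\<Sum>z\<in>Rt - {0}. Phi_comb z (s z) (c z) j)"
      by (rule sum.cong[OF refl]) (use c j in simp)
    also have "Rt - {0} = {z. z \<noteq> 0 \<and> poly D z = 0}"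
      by (auto simp: Rt_def)
    finally show ?thesis by (simp only: s_def)
  qed
  then show ?thesis unfolding s_def by blast
qed

lemma sum_root_factor_kernels_eventually_zero:
  fixes s :: "complex \<Rightarrow> nat"
  assumes "finite Z" "0 \<notin> Z" and ker: "\<forall>z\<in>Z. \<forall>j. poly_shift_op (root_factor z ^ s z) (g z) j = 0"
    and "\<forall>j\<ge>N. (\<Sum>z\<in>Z. g z j) = 0" and z0: "z0 \<in> Z"
  shows "g z0 j = 0"
proof -
  obtain R where R: "\<And>g. \<forall>z\<in>Z. \<forall>j. poly_shift_op (root_factor z ^ s z) (g z) j = 0
      \<Longrightarrow> g z0 = poly_shift_op R (\<lambda>j. \<Sum>z\<in>Z. g z j)"
    using root_factor_kernels_projection[OF assms(1) z0] by blast
  have "\<forall>j\<ge>N. g z0 j = 0"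
    using R[OF ker] poly_shift_op_eventually_zero[OF assms(4)] by simp
  moreover have "z0 \<noteq> 0" using z0 assms(2) by auto
  ultimately show ?thesis
    using root_factor_power_kernel_eventually_zero ker z0 by blast
qed

lemma sum_root_factor_kernels_tendsto_zero:
  fixes s :: "complex \<Rightarrow> nat"
  assumes "finite Z" and ker: "\<forall>z\<in>Z. \<forall>j. poly_shift_op (root_factor z ^ s z) (g z) j = 0"
    and "(\<lambda>n::nat. \<Sum>z\<in>Z. g z (int n)) \<longlonglongrightarrow> 0" and z0: "z0 \<in> Z" "1 \<le> norm z0"
  shows "g z0 j = 0"
proof -
  obtain R where R: "\<And>g. \<forall>z\<in>Z. \<forall>j. poly_shift_op (root_factor z ^ s z) (g z) j = 0
      \<Longrightarrow> g z0 = poly_shift_op R (\<lambda>j. \<Sum>z\<in>Z. g z j)"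
    using root_factor_kernels_projection[OF assms(1) z0(1)] by blast
  have "(\<lambda>n::nat. g z0 (int n)) \<longlonglongrightarrow> 0"
    using R[OF ker] poly_shift_op_tendsto_zero[OF assms(3)] by simp
  then show ?thesis
    using root_factor_power_kernel_tendsto_zero ker z0 by blast
qed

definition coord :: "('d::finite) seq \<Rightarrow> 'd \<Rightarrow> int \<Rightarrow> complex" where
  "coord \<Psi> k = (\<lambda>j. \<Psi> j $ k)"

lemma Tspace_iff: "\<Psi> \<in> Tspace z s \<longleftrightarrow> (\<exists>c. \<forall>j k. \<Psi> j $ k = Phi_comb z s (\<lambda>v. c v k) j)"
proof -
  have component: "(\<Sum>v\<in>{1..s}. \<Sum>m\<in>UNIV. axis m (c v m * Phi z v j)) $ k = Phi_comb z s (\<lambda>v. c v k) j"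
    for c :: "nat \<Rightarrow> 'a \<Rightarrow> complex" and j k
  proof -
    have "axis m (c v m * Phi z v j) $ k = (if m = k then c v k * Phi z v j else 0)" for v m
      by (auto simp: axis_def)
    then show ?thesis by (simp add: Phi_comb_def)
  qed
  show ?thesis
  proof
    assume "\<Psi> \<in> Tspace z s"
    then obtain c where "\<Psi> = (\<lambda>j. \<Sum>v\<in>{1..s}. \<Sum>m\<in>UNIV. axis m (c v m * Phi z v j))"
      unfolding Tspace_def by blast
    then show "\<exists>c. \<forall>j k. \<Psi> j $ k = Phi_comb z s (\<lambda>v. c v k) j" using component by auto
  next
    assume "\<exists>c. \<forall>j k. \<Psi> j $ k = Phi_comb z s (\<lambda>v. c v k) j"
    then obtain c where "\<forall>j k. \<Psi> j $ k = Phi_comb z s (\<lambda>v. c v k) j" by blast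
    then have "\<Psi> = (\<lambda>j. \<Sum>v\<in>{1..s}. \<Sum>m\<in>UNIV. axis m (c v m * Phi z v j))"
      using component by (auto simp: vec_eq_iff)
    then show "\<Psi> \<in> Tspace z s" unfolding Tspace_def by blast
  qed
qed

lemma poly_shift_op_coord_Tspace:
  assumes "\<Psi> \<in> Tspace z s" "z \<noteq> 0"
  shows "poly_shift_op (root_factor z ^ s) (coord \<Psi> k) j = 0"
proof -
  obtain c where "\<forall>j k. \<Psi> j $ k = Phi_comb z s (\<lambda>v. c v k) j"
    using assms(1) Tspace_iff by blast
  then have "coord \<Psi> k = Phi_comb z s (\<lambda>v. c v k)" by (auto simp: coord_def)
  then show ?thesis using poly_shift_op_root_factor_power_Phi_comb[OF assms(2)] by simp
qed

lemma Tspace_sum_eventually_zero: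
  assumes "finite Z" "0 \<notin> Z" and T: "\<forall>z\<in>Z. g z \<in> Tspace z (s z)"
    and "\<forall>j\<ge>N. (\<Sum>z\<in>Z. g z j) = 0" and z0: "z0 \<in> Z"
  shows "g z0 = (\<lambda>_. 0)"
proof -
  have "coord (g z0) k j = 0" for k j
  proof (rule sum_root_factor_kernels_eventually_zero[OF assms(1,2) _ _ z0])
    show "\<forall>z\<in>Z. \<forall>j. poly_shift_op (root_factor z ^ s z) (coord (g z) k) j = 0"
      using T assms(2) poly_shift_op_coord_Tspace by fastforce
    show "\<forall>j\<ge>N. (\<Sum>z\<in>Z. coord (g z) k j) = 0"
      using assms(4) by (simp add: coord_def flip: sum_component)
  qed
  then show ?thesis by (auto simp: coord_def vec_eq_iff)
qed

lemma Tspace_sum_tendsto_zero: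
  assumes "finite Z" "0 \<notin> Z" and T: "\<forall>z\<in>Z. g z \<in> Tspace z (s z)"
    and "(\<lambda>n::nat. \<Sum>z\<in>Z. g z (int n)) \<longlonglongrightarrow> 0" and z0: "z0 \<in> Z" "1 \<le> norm z0"
  shows "g z0 = (\<lambda>_. 0)"
proof -
  have "coord (g z0) k j = 0" for k j
  proof (rule sum_root_factor_kernels_tendsto_zero[OF assms(1) _ _ z0])
    show "\<forall>z\<in>Z. \<forall>j. poly_shift_op (root_factor z ^ s z) (coord (g z) k) j = 0"
      using T assms(2) poly_shift_op_coord_Tspace by fastforce
    show "(\<lambda>n::nat. \<Sum>z\<in>Z. coord (g z) k (int n)) \<longlonglongrightarrow> 0"
      using tendsto_vec_nth[OF assms(4), of k] by (simp add: coord_def)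
  qed
  then show ?thesis by (auto simp: coord_def vec_eq_iff)
qed

lemma matrix_vector_mult_sum: "A *v (\<Sum>x\<in>S. f x) = (\<Sum>x\<in>S. A *v f x)"
  by (induction S rule: infinite_finite_induct) (auto simp: matrix_vector_right_distrib)

lemma bbl_sum: "bbl p q a (\<lambda>t. \<Sum>x\<in>S. f x t) j = (\<Sum>x\<in>S. bbl p q a (f x) j)"
  by (simp add: bbl_def matrix_vector_mult_sum sum.swap[of _ "{p..q}"])

lemma bbl_add: "bbl p q a (\<lambda>t. u t + v t) j = bbl p q a u j + bbl p q a v j"
  by (simp add: bbl_def matrix_vector_right_distrib sum.distrib)

lemma bbl_diff: "bbl p q a (\<lambda>t. u t - v t) j = bbl p q a u j - bbl p q a v j"
  by (simp add: bbl_def matrix_vector_mult_diff_distrib sum_subtractf)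

lemma bbl_cong_from:
  assumes "\<forall>t\<ge>j + p. u t = v t"
  shows "bbl p q a u j = bbl p q a v j"
  unfolding bbl_def using assms by (intro sum.cong) auto

lemma poly_shift_op_coord_bbl:
  "poly_shift_op P (coord (bbl p q a \<Psi>) i) j
    = (\<Sum>r\<in>{p..q}. \<Sum>k\<in>UNIV. a r $ i $ k * poly_shift_op P (coord \<Psi> k) (j + r))"
proof -
  have "coord (bbl p q a \<Psi>) i = (\<lambda>j. \<Sum>r\<in>{p..q}. \<Sum>k\<in>UNIV. a r $ i $ k * coord \<Psi> k (j + r))"
    by (auto simp: coord_def bbl_def matrix_vector_mult_def)
  then show ?thesis
    by (simp add: poly_shift_op_sum_seq poly_shift_op_cmult_seq poly_shift_op_translate[of P "coord \<Psi> _"])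
qed

lemma poly_shift_op_symbol_poly_mat:
  assumes "p \<le> q"
  shows "(\<Sum>k\<in>UNIV. poly_shift_op (symbol_poly_mat p q a $ i $ k) (coord \<Psi> k) j) = bbl p q a \<Psi> (j - p) $ i"
proof -
  have "poly_shift_op (symbol_poly_mat p q a $ i $ k) u j = (\<Sum>r\<in>{p..q}. a r $ i $ k * u (j - p + r))"
    for k u
  proof -
    have "poly_shift_op (symbol_poly_mat p q a $ i $ k) u j
        = (\<Sum>r\<in>{p..q}. poly_shift_op (monom (a r $ i $ k) (nat (r - p))) u j)"
      unfolding symbol_poly_mat_def by (simp add: poly_shift_op_sum)
    also have "\<dots> = (\<Sum>r\<in>{p..q}. a r $ i $ k * u (j - p + r))"
      by (rule sum.cong) (auto simp: poly_shift_op_monom algebra_simps)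
    finally show ?thesis .
  qed
  then have "(\<Sum>k\<in>UNIV. poly_shift_op (symbol_poly_mat p q a $ i $ k) (coord \<Psi> k) j)
      = (\<Sum>k\<in>UNIV. \<Sum>r\<in>{p..q}. a r $ i $ k * \<Psi> (j - p + r) $ k)"
    by (simp add: coord_def)
  also have "\<dots> = bbl p q a \<Psi> (j - p) $ i"
    by (subst sum.swap) (simp add: bbl_def matrix_vector_mult_def)
  finally show ?thesis .
qed

definition cofactor :: "'a::comm_ring_1^'n^'n \<Rightarrow> 'n \<Rightarrow> 'n \<Rightarrow> 'a" where
  "cofactor M k i = det (\<chi> r. if r = k then axis i 1 else row r M)"

lemma sum_row_mult_cofactor: "(\<Sum>i\<in>UNIV. M $ m $ i * cofactor M k i) = (if m = k then det M else 0)"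
proof -
  have "(\<Sum>i\<in>UNIV. M $ m $ i * cofactor M k i)
      = (\<Sum>i\<in>UNIV. det (\<chi> r. if r = k then M $ m $ i *s axis i 1 else row r M))"
    unfolding cofactor_def by (simp add: det_row_mul)
  also have "\<dots> = det (\<chi> r. if r = k then (\<Sum>i\<in>UNIV. M $ m $ i *s axis i 1) else row r M)"
    by (rule det_linear_row_sum[symmetric]) simp
  also have "(\<Sum>i\<in>UNIV. M $ m $ i *s axis i (1::'a)) = row m M"
  proof -
    have "M $ m $ x * (if i = x then 1 else 0) = (if i = x then M $ m $ x else 0)" for i x
      by simp
    then show ?thesis by (simp add: vec_eq_iff row_def axis_def)
  qed
  finally have row_replaced: "(\<Sum>i\<in>UNIV. M $ m $ i * cofactor M k i) = det (\<chi> r. if r = k then row m M else row r M)" .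
  show ?thesis
  proof (cases "m = k")
    case True
    have "(\<chi> r. if r = k then row m M else row r M) = M"
      using True by (simp add: vec_eq_iff row_def)
    then show ?thesis using row_replaced True by simp
  next
    case False
    have "det (\<chi> r. if r = k then row m M else row r M) = 0"
      by (rule det_identical_rows[of k m]) (use False in \<open>auto simp: row_def vec_eq_iff\<close>)
    then show ?thesis using row_replaced False by simp
  qed
qed

lemma sum_cofactor_transpose_mult:
  "(\<Sum>i\<in>UNIV. cofactor (transpose M) k i * M $ i $ m) = (if m = k then det M else 0)"
proof -
  have "transpose M $ i $ j = M $ j $ i" for i j
    by (simp add: transpose_def)
  then show ?thesis using sum_row_mult_cofactor[of "transpose M" m k] by (simp add: mult.commute)
qed

lemma poly_shift_op_symbol_det_eventually_zero:
  assumes pq: "p \<le> q" and ez: "\<forall>j\<ge>J. bbl p q a \<Psi> j = 0"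
  shows "\<forall>j\<ge>J + p. poly_shift_op (symbol_det p q a) (coord \<Psi> k) j = 0"
proof -
  define B where "B = symbol_poly_mat p q a"
  define w where "w = (\<lambda>i j. \<Sum>m\<in>UNIV. poly_shift_op (B $ i $ m) (coord \<Psi> m) j)"
  have w_zero: "\<forall>j\<ge>J + p. w i j = 0" for i
    unfolding w_def B_def using ez by (simp add: poly_shift_op_symbol_poly_mat[OF pq])
  have "(\<lambda>j. \<Sum>i\<in>UNIV. poly_shift_op (cofactor (transpose B) k i) (w i) j)
      = (\<lambda>j. \<Sum>i\<in>UNIV. \<Sum>m\<in>UNIV. poly_shift_op (cofactor (transpose B) k i * B $ i $ m) (coord \<Psi> m) j)"
    unfolding w_def by (simp add: poly_shift_op_sum_seq poly_shift_op_mult)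
  also have "\<dots> = (\<lambda>j. \<Sum>m\<in>UNIV. poly_shift_op (\<Sum>i\<in>UNIV. cofactor (transpose B) k i * B $ i $ m) (coord \<Psi> m) j)"
    by (rule ext, subst sum.swap, simp add: poly_shift_op_sum)
  also have "\<dots> = (\<lambda>j. \<Sum>m\<in>UNIV. poly_shift_op (if m = k then det B else 0) (coord \<Psi> m) j)"
    by (simp add: sum_cofactor_transpose_mult)
  also have "\<dots> = poly_shift_op (det B) (coord \<Psi> k)"
  proof
    fix j
    have "poly_shift_op (if m = k then det B else 0) (coord \<Psi> m) j
        = (if m = k then poly_shift_op (det B) (coord \<Psi> k) j else 0)" for m
      by auto
    then show "(\<Sum>m\<in>UNIV. poly_shift_op (if m = k then det B else 0) (coord \<Psi> m) j)
        = poly_shift_op (det B) (coord \<Psi> k) j"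
      by simp
  qed
  finally have cramer: "poly_shift_op (det B) (coord \<Psi> k)
      = (\<lambda>j. \<Sum>i\<in>UNIV. poly_shift_op (cofactor (transpose B) k i) (w i) j)" ..
  show ?thesis
  proof (intro allI impI)
    fix j assume "J + p \<le> j"
    then have "poly_shift_op (cofactor (transpose B) k i) (w i) j = 0" for i
      using poly_shift_op_eventually_zero[OF w_zero] by blast
    then show "poly_shift_op (symbol_det p q a) (coord \<Psi> k) j = 0"
      using cramer by (simp add: symbol_det_def B_def)
  qed
qed

lemma finite_nonzero_roots: "regular_bbl p q a \<Longrightarrow> finite (nonzero_roots p q a)"
  unfolding regular_bbl_def nonzero_roots_def
  by (rule finite_subset[OF _ poly_roots_finite]) auto

lemma bbl_eventual_Tspace_decomposition:
  assumes pq: "p \<le> q" and reg: "regular_bbl p q a" and ez: "\<forall>j\<ge>J0. bbl p q a \<Psi> j = 0"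
  obtains J h where "\<forall>z\<in>nonzero_roots p q a. h z \<in> Tspace z (root_mult p q a z)"
    and "\<forall>j\<ge>J. \<Psi> j = (\<Sum>z\<in>nonzero_roots p q a. h z j)"
proof -
  define D where "D = symbol_det p q a"
  have D: "D \<noteq> 0" using reg by (simp add: D_def regular_bbl_def)
  have "\<exists>c. \<forall>j\<ge>J0 + p + int (order 0 D).
      coord \<Psi> k j = (\<Sum>z\<in>nonzero_roots p q a. Phi_comb z (root_mult p q a z) (c z) j)" for k
    using recurrence_eventual_solution[OF D poly_shift_op_symbol_det_eventually_zero[OF pq ez, folded D_def]]
    by (simp add: D_def nonzero_roots_def root_mult_def)
  then obtain C where C: "\<And>k. \<forall>j\<ge>J0 + p + int (order 0 D).
      coord \<Psi> k j = (\<Sum>z\<in>nonzero_roots p q a. Phi_comb z (root_mult p q a z) (C k z) j)"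
    by metis
  define h where "h = (\<lambda>z j. \<chi> k. Phi_comb z (root_mult p q a z) (C k z) j)"
  have "h z \<in> Tspace z (root_mult p q a z)" for z
    unfolding Tspace_iff by (rule exI[of _ "\<lambda>v k. C k z v"]) (simp add: h_def)
  moreover have "\<forall>j\<ge>J0 + p + int (order 0 D). \<Psi> j = (\<Sum>z\<in>nonzero_roots p q a. h z j)"
    using C by (simp add: vec_eq_iff h_def coord_def)
  ultimately show ?thesis using that by blast
qed

text \<open>A commutes with polynomials in T, so A h z is again annihilated by a power of T - z; the
  independence of generalized eigensequences for distinct roots then splits the bulk equation.\<close>
lemma Tspace_sum_bbl_eventually_zero:
  assumes "finite Z" "0 \<notin> Z" and T: "\<forall>z\<in>Z. h z \<in> Tspace z (s z)"
    and ez: "\<forall>j\<ge>N. bbl p q a (\<lambda>t. \<Sum>z\<in>Z. h z t) j = 0" and z0: "z0 \<in> Z"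
  shows "bbl p q a (h z0) = (\<lambda>_. 0)"
proof -
  have "coord (bbl p q a (h z0)) i j = 0" for i j
  proof (rule sum_root_factor_kernels_eventually_zero[OF assms(1,2) _ _ z0])
    show "\<forall>z\<in>Z. \<forall>j. poly_shift_op (root_factor z ^ s z) (coord (bbl p q a (h z)) i) j = 0"
      using T assms(2) poly_shift_op_coord_Tspace by (fastforce simp: poly_shift_op_coord_bbl)
    show "\<forall>j\<ge>N. (\<Sum>z\<in>Z. coord (bbl p q a (h z)) i j) = 0"
      using ez by (simp add: coord_def bbl_sum flip: sum_component)
  qed
  then show ?thesis by (auto simp: coord_def vec_eq_iff)
qed

lemma bbl_eventual_kernel_decomposition:
  assumes pq: "p \<le> q" and reg: "regular_bbl p q a" and bulk: "\<forall>j\<ge>J0. bbl p q a \<Psi> j = 0"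
  obtains J h where "\<forall>z\<in>nonzero_roots p q a. h z \<in> kerA p q a"
    and "\<forall>z\<in>nonzero_roots p q a. h z \<in> Tspace z (root_mult p q a z)"
    and "\<forall>j\<ge>J. \<Psi> j = (\<Sum>z\<in>nonzero_roots p q a. h z j)"
proof -
  define NZ where "NZ = nonzero_roots p q a"
  have fin: "finite NZ" and NZ0: "0 \<notin> NZ"
    using finite_nonzero_roots[OF reg] by (auto simp: NZ_def nonzero_roots_def)
  obtain J h where T: "\<forall>z\<in>NZ. h z \<in> Tspace z (root_mult p q a z)"
    and h_sum: "\<forall>j\<ge>J. \<Psi> j = (\<Sum>z\<in>NZ. h z j)"
    by (rule bbl_eventual_Tspace_decomposition[OF pq reg bulk, folded NZ_def])
  have "bbl p q a (\<lambda>t. \<Sum>z\<in>NZ. h z t) j = 0" if j: "max (J - p) J0 \<le> j" for j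
  proof -
    have "bbl p q a (\<lambda>t. \<Sum>z\<in>NZ. h z t) j = bbl p q a \<Psi> j"
      by (rule bbl_cong_from) (use j h_sum in auto)
    then show ?thesis using bulk j by simp
  qed
  then have bulk_sum: "\<forall>j\<ge>max (J - p) J0. bbl p q a (\<lambda>t. \<Sum>z\<in>NZ. h z t) j = 0"
    by blast
  have "\<forall>z\<in>NZ. h z \<in> kerA p q a"
    using Tspace_sum_bbl_eventually_zero[OF fin NZ0 T bulk_sum] by (simp add: kerA_def)
  then show ?thesis
    using that T h_sum unfolding NZ_def by blast
qed

definition square_summable :: "(int \<Rightarrow> 'a::real_normed_vector) \<Rightarrow> bool" where
  "square_summable u \<longleftrightarrow> summable (\<lambda>n::nat. (norm (u (int n + 1)))\<^sup>2)"

lemma Hsq_iff: "\<Psi> \<in> Hsq \<longleftrightarrow> \<Psi> \<in> V1inf \<and> square_summable \<Psi>"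
  by (simp add: Hsq_def square_summable_def)

lemma square_summable_add:
  assumes "square_summable u" "square_summable v"
  shows "square_summable (\<lambda>j. u j + v j)"
  unfolding square_summable_def
proof (rule summable_comparison_test')
  show "summable (\<lambda>n. 2 * (norm (u (int n + 1)))\<^sup>2 + 2 * (norm (v (int n + 1)))\<^sup>2)"
    using assms unfolding square_summable_def by (intro summable_add summable_mult)
  fix n
  have sq: "(x + y)\<^sup>2 \<le> 2 * x\<^sup>2 + 2 * y\<^sup>2" for x y :: real
    using sum_squares_ge_zero[of "x - y" 0] by (simp add: power2_eq_square algebra_simps)
  have "(norm (u (int n + 1) + v (int n + 1)))\<^sup>2 \<le> (norm (u (int n + 1)) + norm (v (int n + 1)))\<^sup>2"
    by (intro power_mono norm_triangle_ineq) simp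
  also have "\<dots> \<le> 2 * (norm (u (int n + 1)))\<^sup>2 + 2 * (norm (v (int n + 1)))\<^sup>2"
    by (rule sq)
  finally show "norm ((norm (u (int n + 1) + v (int n + 1)))\<^sup>2)
      \<le> 2 * (norm (u (int n + 1)))\<^sup>2 + 2 * (norm (v (int n + 1)))\<^sup>2" by simp
qed

lemma square_summable_sum:
  assumes "\<forall>x\<in>S. square_summable (f x)"
  shows "square_summable (\<lambda>j. \<Sum>x\<in>S. f x j)"
  using assms
proof (induction S rule: infinite_finite_induct)
  case (insert x S)
  then show ?case by (simp add: square_summable_add)
qed (auto simp: square_summable_def)

lemma square_summable_cmult:
  fixes u :: "int \<Rightarrow> 'a::real_normed_field"
  shows "square_summable u \<Longrightarrow> square_summable (\<lambda>j. c * u j)"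
  unfolding square_summable_def
  using summable_mult[of _ "(norm c)\<^sup>2"] by (simp add: norm_mult power_mult_distrib)

lemma square_summable_vec:
  fixes u :: "int \<Rightarrow> complex^'d::finite"
  assumes "\<forall>k. square_summable (coord u k)"
  shows "square_summable u"
proof -
  have "(norm (u j))\<^sup>2 = (\<Sum>k\<in>UNIV. (norm (u j $ k))\<^sup>2)" for j
    by (simp add: norm_vec_def L2_set_def sum_nonneg)
  then show ?thesis
    using assms unfolding square_summable_def by (simp add: summable_sum coord_def)
qed

lemma square_summable_eventually_zero:
  assumes "\<forall>j\<ge>J. u j = 0"
  shows "square_summable u"
  unfolding square_summable_def
proof (rule summable_comparison_test')
  show "summable (\<lambda>n::nat. 0::real)" by simp
  show "norm ((norm (u (int n + 1)))\<^sup>2) \<le> 0" if "nat J \<le> n" for n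
    using assms that by auto
qed

lemma square_summable_tendsto_zero:
  assumes "square_summable \<Psi>"
  shows "(\<lambda>n::nat. \<Psi> (int n)) \<longlonglongrightarrow> 0"
proof -
  have "(\<lambda>n. (norm (\<Psi> (int n + 1)))\<^sup>2) \<longlonglongrightarrow> 0"
    using assms unfolding square_summable_def by (rule summable_LIMSEQ_zero)
  then have "(\<lambda>n. sqrt ((norm (\<Psi> (int n + 1)))\<^sup>2)) \<longlonglongrightarrow> sqrt 0"
    by (rule tendsto_real_sqrt)
  then have "(\<lambda>n. norm (\<Psi> (int n + 1))) \<longlonglongrightarrow> 0"
    by simp
  then have "(\<lambda>n. \<Psi> (int (Suc n))) \<longlonglongrightarrow> 0"
    by (simp add: tendsto_norm_zero_iff add.commute)
  then show ?thesis by (rule LIMSEQ_imp_Suc)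
qed

lemma summable_Suc_power_mult_geometric:
  fixes x :: real
  shows "\<bar>x\<bar> < 1 \<Longrightarrow> summable (\<lambda>n. real (Suc n) ^ m * x ^ n)"
proof (induction m arbitrary: x)
  case 0
  then show ?case by (simp add: summable_geometric)
next
  case (Suc m)
  have "summable (\<lambda>n. real n ^ m * y ^ n)" if "norm y < 1" for y :: real
  proof (rule summable_comparison_test')
    show "summable (\<lambda>n. real (Suc n) ^ m * \<bar>y\<bar> ^ n)" using Suc.IH[of "\<bar>y\<bar>"] that by simp
    show "norm (real n ^ m * y ^ n) \<le> real (Suc n) ^ m * \<bar>y\<bar> ^ n" for n
      by (simp add: abs_mult power_abs power_mono mult_right_mono)
  qed
  then have "summable (\<lambda>n. diffs (\<lambda>n. real n ^ m) n * x ^ n)"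
    by (intro termdiff_converges[of x 1]) (use Suc.prems in auto)
  then show ?case by (simp add: diffs_def)
qed

lemma norm_ffact_int_le: "norm (ffact_int j k) \<le> (real_of_int \<bar>j\<bar> + real k) ^ k"
proof (induction k)
  case 0
  then show ?case by (simp add: ffact_int_def)
next
  case (Suc k)
  have "norm (of_int j - of_nat k :: complex) = \<bar>real_of_int j - real k\<bar>"
    by (metis norm_of_real of_real_diff of_real_of_int_eq of_real_of_nat_eq real_norm_def)
  then have factor: "norm (of_int j - of_nat k :: complex) \<le> real_of_int \<bar>j\<bar> + real (Suc k)"
    by simp
  have "norm (ffact_int j k) \<le> (real_of_int \<bar>j\<bar> + real (Suc k)) ^ k"
    using Suc.IH by (rule order_trans) (simp add: power_mono)
  then have "norm (ffact_int j k) * norm (of_int j - of_nat k :: complex)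
      \<le> (real_of_int \<bar>j\<bar> + real (Suc k)) ^ k * (real_of_int \<bar>j\<bar> + real (Suc k))"
    using factor by (rule mult_mono) auto
  then show ?case by (simp add: ffact_int_Suc norm_mult mult.commute)
qed

lemma square_summable_Phi:
  assumes z0: "z \<noteq> 0" and z1: "norm z < 1"
  shows "square_summable (Phi z v)"
proof -
  define \<rho> where "\<rho> = norm z"
  define k where "k = v - 1"
  define A where "A = \<rho> powi (2 - int v)"
  have \<rho>: "\<rho> > 0" "\<rho> < 1" using z0 z1 by (auto simp: \<rho>_def)
  have A: "A \<ge> 0" using \<rho> by (simp add: A_def)
  have bound: "(norm (Phi z v (int n + 1)))\<^sup>2 \<le> (A * real (Suc k) ^ k)\<^sup>2 * (real (Suc n) ^ (2 * k) * (\<rho>\<^sup>2) ^ n)"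
    for n
  proof -
    have "norm (z powi (int n + 1 - int v + 1)) = \<rho> powi (int n + (2 - int v))"
      by (simp add: \<rho>_def norm_power_int algebra_simps)
    also have "\<dots> = \<rho> ^ n * A" using \<rho> by (simp add: power_int_add A_def)
    finally have pw: "norm (z powi (int n + 1 - int v + 1)) = \<rho> ^ n * A" .
    have "norm (ffact_int (int n + 1) k) \<le> (real_of_int \<bar>int n + 1\<bar> + real k) ^ k"
      by (rule norm_ffact_int_le)
    also have "\<dots> \<le> (real (Suc k) * real (Suc n)) ^ k"
      by (rule power_mono) (auto simp: algebra_simps)
    finally have ff: "norm (ffact_int (int n + 1) k) \<le> real (Suc k) ^ k * real (Suc n) ^ k"
      by (simp add: power_mult_distrib)
    have "norm (Phi z v (int n + 1)) = norm (ffact_int (int n + 1) k) * (\<rho> ^ n * A)"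
      by (simp only: Phi_def norm_mult pw k_def)
    also have "\<dots> \<le> (real (Suc k) ^ k * real (Suc n) ^ k) * (\<rho> ^ n * A)"
      using ff A \<rho> by (intro mult_right_mono) auto
    finally have "norm (Phi z v (int n + 1)) \<le> (A * real (Suc k) ^ k) * (real (Suc n) ^ k * \<rho> ^ n)"
      by (simp add: ac_simps)
    then have "(norm (Phi z v (int n + 1)))\<^sup>2 \<le> ((A * real (Suc k) ^ k) * (real (Suc n) ^ k * \<rho> ^ n))\<^sup>2"
      by (rule power_mono) simp
    then show ?thesis
      by (simp add: power_mult_distrib power_mult[symmetric] power_even_eq mult.commute[of 2])
  qed
  have "summable (\<lambda>n. (A * real (Suc k) ^ k)\<^sup>2 * (real (Suc n) ^ (2 * k) * (\<rho>\<^sup>2) ^ n))"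
    by (rule summable_mult, rule summable_Suc_power_mult_geometric)
      (use \<rho> in \<open>simp add: abs_less_iff power_less_one_iff\<close>)
  then show ?thesis unfolding square_summable_def
    by (rule summable_comparison_test') (use bound in auto)
qed

lemma square_summable_Tspace:
  assumes "\<Psi> \<in> Tspace z s" "z \<noteq> 0" "norm z < 1"
  shows "square_summable \<Psi>"
proof (rule square_summable_vec, rule allI)
  fix k
  obtain c where "\<forall>j k. \<Psi> j $ k = Phi_comb z s (\<lambda>v. c v k) j"
    using assms(1) Tspace_iff by blast
  then have "coord \<Psi> k = (\<lambda>j. \<Sum>v\<in>{1..s}. c v k * Phi z v j)"
    by (auto simp: coord_def Phi_comb_def)
  moreover have "square_summable (\<lambda>j. \<Sum>v\<in>{1..s}. c v k * Phi z v j)"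
    by (intro square_summable_sum ballI square_summable_cmult square_summable_Phi assms(2,3))
  ultimately show "square_summable (coord \<Psi> k)" by simp
qed

lemma M1inf_iff: "\<Psi> \<in> M1inf p q a \<longleftrightarrow> \<Psi> \<in> V1inf \<and> (\<forall>j\<ge>1 - min p 0. bbl p q a \<Psi> j = 0)"
  by (auto simp: M1inf_def proj_def fun_eq_iff)

lemma proj_shiftT_iterate:
  assumes "f \<in> V1inf"
  shows "((proj 1 \<circ> shiftT) ^^ n) f = (\<lambda>j. if 1 \<le> j then f (j + int n) else 0)"
proof (induction n)
  case 0
  then show ?case using assms by (auto simp: V1inf_def)
next
  case (Suc n)
  have "((proj 1 \<circ> shiftT) ^^ Suc n) f = proj 1 (shiftT (((proj 1 \<circ> shiftT) ^^ n) f))"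
    by simp
  then show ?case by (simp only: Suc) (auto simp: proj_def shiftT_def algebra_simps)
qed

lemma F1minus_iff: "f \<in> F1minus p q a \<longleftrightarrow> f \<in> M1inf p q a \<and> (\<exists>N. \<forall>j\<ge>N. f j = 0)"
proof
  assume "f \<in> F1minus p q a"
  then obtain k where f: "f \<in> M1inf p q a" and k: "((proj 1 \<circ> shiftT) ^^ k) f = (\<lambda>_. 0)"
    by (auto simp: F1minus_def)
  have "f j = 0" if "1 + int k \<le> j" for j
    using fun_cong[OF k, of "j - int k"] that f by (simp add: proj_shiftT_iterate M1inf_iff)
  then show "f \<in> M1inf p q a \<and> (\<exists>N. \<forall>j\<ge>N. f j = 0)" using f by blast
next
  assume "f \<in> M1inf p q a \<and> (\<exists>N. \<forall>j\<ge>N. f j = 0)"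
  then obtain N where f: "f \<in> M1inf p q a" and N: "\<forall>j\<ge>N. f j = 0" by blast
  define k where "k = Suc (nat (max N 1))"
  have "((proj 1 \<circ> shiftT) ^^ k) f = (\<lambda>_. 0)"
  proof
    fix j
    have "((proj 1 \<circ> shiftT) ^^ k) f j = (if 1 \<le> j then f (j + int k) else 0)"
      using proj_shiftT_iterate[of f k] f by (simp add: M1inf_iff)
    then show "((proj 1 \<circ> shiftT) ^^ k) f j = 0"
      using N by (simp add: k_def)
  qed
  then show "f \<in> F1minus p q a" using f by (auto simp: F1minus_def k_def)
qed

lemma bbl_proj_1:
  assumes "1 - min p 0 \<le> j"
  shows "bbl p q a (proj 1 u) j = bbl p q a u j"
  by (rule bbl_cong_from) (use assms in \<open>auto simp: proj_def\<close>)

definition stable_roots :: "int \<Rightarrow> int \<Rightarrow> (int \<Rightarrow> complex^('d::finite)^'d) \<Rightarrow> complex set" where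
  "stable_roots p q a = {z \<in> nonzero_roots p q a. norm z < 1}"

lemma finite_stable_roots: "regular_bbl p q a \<Longrightarrow> finite (stable_roots p q a)"
  by (rule finite_subset[OF _ finite_nonzero_roots]) (auto simp: stable_roots_def)

lemma zero_notin_stable_roots: "0 \<notin> stable_roots p q a"
  by (simp add: stable_roots_def nonzero_roots_def)

lemma F1minus_plus_stable_in_M1inf_Hsq:
  assumes reg: "regular_bbl p q a" and f: "f \<in> F1minus p q a"
    and g: "\<forall>z\<in>stable_roots p q a. g z \<in> kerA p q a \<inter> Tspace z (root_mult p q a z)"
  shows "(\<lambda>j. f j + proj 1 (\<lambda>i. \<Sum>z\<in>stable_roots p q a. g z i) j) \<in> M1inf p q a \<inter> Hsq"
proof -
  define G where "G = (\<lambda>i. \<Sum>z\<in>stable_roots p q a. g z i)"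
  obtain N where fM: "f \<in> M1inf p q a" and N: "\<forall>j\<ge>N. f j = 0"
    using f F1minus_iff by blast
  have "bbl p q a (proj 1 G) j = 0" if "1 - min p 0 \<le> j" for j
    using g that by (simp add: bbl_proj_1 G_def bbl_sum kerA_def)
  then have "(\<lambda>j. f j + proj 1 G j) \<in> M1inf p q a"
    using fM by (auto simp: M1inf_iff V1inf_def proj_def bbl_add)
  moreover have "square_summable G"
    unfolding G_def using g finite_stable_roots[OF reg]
    by (intro square_summable_sum ballI square_summable_Tspace)
      (auto simp: stable_roots_def nonzero_roots_def)
  then have "square_summable (\<lambda>j. f j + proj 1 G j)"
    by (intro square_summable_add square_summable_eventually_zero[OF N])
      (simp add: square_summable_def proj_def)
  ultimately show ?thesis by (simp add: Hsq_iff M1inf_iff G_def)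
qed

lemma M1inf_Hsq_eventually_stable_sum:
  assumes pq: "p \<le> q" and reg: "regular_bbl p q a" and \<Psi>: "\<Psi> \<in> M1inf p q a \<inter> Hsq"
  obtains J g where "\<forall>z\<in>stable_roots p q a. g z \<in> kerA p q a \<inter> Tspace z (root_mult p q a z)"
    and "\<forall>j\<ge>J. \<Psi> j = (\<Sum>z\<in>stable_roots p q a. g z j)"
proof -
  define NZ where "NZ = nonzero_roots p q a"
  have fin: "finite NZ" and NZ0: "0 \<notin> NZ"
    using finite_nonzero_roots[OF reg] by (auto simp: NZ_def nonzero_roots_def)
  have "\<forall>j\<ge>1 - min p 0. bbl p q a \<Psi> j = 0"
    using \<Psi> M1inf_iff by blast
  then obtain J h where ker: "\<forall>z\<in>NZ. h z \<in> kerA p q a"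
    and T: "\<forall>z\<in>NZ. h z \<in> Tspace z (root_mult p q a z)"
    and h_sum: "\<forall>j\<ge>J. \<Psi> j = (\<Sum>z\<in>NZ. h z j)"
    unfolding NZ_def by (rule bbl_eventual_kernel_decomposition[OF pq reg])
  have "\<forall>\<^sub>F n in sequentially. \<Psi> (int n) = (\<Sum>z\<in>NZ. h z (int n))"
    using h_sum by (auto simp: eventually_sequentially intro: exI[of _ "nat J"])
  moreover have "(\<lambda>n::nat. \<Psi> (int n)) \<longlonglongrightarrow> 0"
    using \<Psi> by (simp add: Hsq_iff square_summable_tendsto_zero)
  ultimately have lim: "(\<lambda>n::nat. \<Sum>z\<in>NZ. h z (int n)) \<longlonglongrightarrow> 0"
    by (rule Lim_transform_eventually[rotated])
  have unstable: "h z = (\<lambda>_. 0)" if "z \<in> NZ - stable_roots p q a" for z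
  proof -
    have "z \<in> NZ" "1 \<le> norm z"
      using that by (auto simp: stable_roots_def NZ_def)
    then show ?thesis by (rule Tspace_sum_tendsto_zero[OF fin NZ0 T lim])
  qed
  have stable: "stable_roots p q a \<subseteq> NZ"
    by (auto simp: stable_roots_def NZ_def)
  have "\<Psi> j = (\<Sum>z\<in>stable_roots p q a. h z j)" if "J \<le> j" for j
  proof -
    have "\<Psi> j = (\<Sum>z\<in>NZ - stable_roots p q a. h z j) + (\<Sum>z\<in>stable_roots p q a. h z j)"
      using h_sum that by (simp add: sum.subset_diff[OF stable fin])
    also have "(\<Sum>z\<in>NZ - stable_roots p q a. h z j) = 0"
      using unstable by simp
    finally show ?thesis by simp
  qed
  moreover have "\<forall>z\<in>stable_roots p q a. h z \<in> kerA p q a \<inter> Tspace z (root_mult p q a z)"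
    using ker T by (auto simp: stable_roots_def NZ_def)
  ultimately show ?thesis using that by blast
qed

lemma M1inf_Hsq_decomposition:
  assumes pq: "p \<le> q" and reg: "regular_bbl p q a" and \<Psi>: "\<Psi> \<in> M1inf p q a \<inter> Hsq"
  obtains f g where "\<Psi> = (\<lambda>j. f j + proj 1 (\<lambda>i. \<Sum>z\<in>stable_roots p q a. g z i) j)"
    and "f \<in> F1minus p q a"
    and "\<forall>z\<in>stable_roots p q a. g z \<in> kerA p q a \<inter> Tspace z (root_mult p q a z)"
proof -
  obtain J g where g: "\<forall>z\<in>stable_roots p q a. g z \<in> kerA p q a \<inter> Tspace z (root_mult p q a z)"
    and g_sum: "\<forall>j\<ge>J. \<Psi> j = (\<Sum>z\<in>stable_roots p q a. g z j)"
    by (rule M1inf_Hsq_eventually_stable_sum[OF pq reg \<Psi>])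
  define G where "G = (\<lambda>i. \<Sum>z\<in>stable_roots p q a. g z i)"
  define f where "f = (\<lambda>j. \<Psi> j - proj 1 G j)"
  have bulk: "\<forall>j\<ge>1 - min p 0. bbl p q a \<Psi> j = 0"
    using \<Psi> M1inf_iff by blast
  have bulk_G: "bbl p q a (proj 1 G) j = 0" if "1 - min p 0 \<le> j" for j
    using g that by (simp add: bbl_proj_1 G_def bbl_sum kerA_def)
  have "f \<in> V1inf"
    using \<Psi> by (simp add: f_def V1inf_def proj_def M1inf_iff)
  moreover have "bbl p q a f j = 0" if "1 - min p 0 \<le> j" for j
  proof -
    have "bbl p q a f j = bbl p q a \<Psi> j - bbl p q a (proj 1 G) j"
      unfolding f_def by (rule bbl_diff)
    then show ?thesis using bulk bulk_G[OF that] that by simp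
  qed
  ultimately have "f \<in> M1inf p q a"
    by (simp add: M1inf_iff)
  moreover have "\<forall>j\<ge>max J 1. f j = 0"
    using g_sum by (simp add: f_def proj_def G_def)
  ultimately have "f \<in> F1minus p q a"
    using F1minus_iff by blast
  moreover have "\<Psi> = (\<lambda>j. f j + proj 1 (\<lambda>i. \<Sum>z\<in>stable_roots p q a. g z i) j)"
    by (simp add: f_def G_def)
  ultimately show ?thesis
    using that g by blast
qed

lemma stable_sum_eventually_zero:
  assumes "regular_bbl p q a" and "\<forall>z\<in>stable_roots p q a. g z \<in> Tspace z (root_mult p q a z)"
    and "\<forall>j\<ge>N. (\<Sum>z\<in>stable_roots p q a. g z j) = 0"
  shows "\<forall>z\<in>stable_roots p q a. g z = (\<lambda>_. 0)"
  using Tspace_sum_eventually_zero[OF finite_stable_roots zero_notin_stable_roots] assms by blast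

theorem mainTheorem18:
  fixes p q :: int and a :: "int \<Rightarrow> complex^'d^'d"
  assumes band: "is_laurent_bandwidth p q a"
    and reg: "regular_bbl p q a"
  defines "Zin \<equiv> {z \<in> nonzero_roots p q a. norm z < 1}"
    and "K \<equiv> \<lambda>z. kerA p q a \<inter> Tspace z (root_mult p q a z)"
  shows "M1inf p q a \<inter> Hsq =
           {(\<lambda>j. f j + proj 1 (\<lambda>i. \<Sum>z\<in>Zin. g z i) j) | f g.
              f \<in> F1minus p q a \<and> (\<forall>z\<in>Zin. g z \<in> K z)}
         \<and> (\<forall>g. (\<forall>z\<in>Zin. g z \<in> K z) \<and> (\<lambda>i. \<Sum>z\<in>Zin. g z i) = (\<lambda>_. 0)
              \<longrightarrow> (\<forall>z\<in>Zin. g z = (\<lambda>_. 0)))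
         \<and> (\<forall>f g. f \<in> F1minus p q a \<and> (\<forall>z\<in>Zin. g z \<in> K z)
              \<and> f = proj 1 (\<lambda>i. \<Sum>z\<in>Zin. g z i) \<longrightarrow> f = (\<lambda>_. 0))"
proof -
  have pq: "p \<le> q" using band by (simp add: is_laurent_bandwidth_def)
  have Zin: "Zin = stable_roots p q a" by (simp add: Zin_def stable_roots_def)
  have sum: "M1inf p q a \<inter> Hsq =
      {(\<lambda>j. f j + proj 1 (\<lambda>i. \<Sum>z\<in>Zin. g z i) j) | f g. f \<in> F1minus p q a \<and> (\<forall>z\<in>Zin. g z \<in> K z)}"
  proof (intro equalityI subsetI)
    fix \<Psi> assume "\<Psi> \<in> M1inf p q a \<inter> Hsq"
    then obtain f g where "\<Psi> = (\<lambda>j. f j + proj 1 (\<lambda>i. \<Sum>z\<in>stable_roots p q a. g z i) j)"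
      and "f \<in> F1minus p q a"
      and "\<forall>z\<in>stable_roots p q a. g z \<in> kerA p q a \<inter> Tspace z (root_mult p q a z)"
      by (rule M1inf_Hsq_decomposition[OF pq reg])
    then show "\<Psi> \<in> {(\<lambda>j. f j + proj 1 (\<lambda>i. \<Sum>z\<in>Zin. g z i) j) | f g.
        f \<in> F1minus p q a \<and> (\<forall>z\<in>Zin. g z \<in> K z)}"
      unfolding Zin K_def by blast
  next
    fix \<Psi> assume "\<Psi> \<in> {(\<lambda>j. f j + proj 1 (\<lambda>i. \<Sum>z\<in>Zin. g z i) j) | f g.
        f \<in> F1minus p q a \<and> (\<forall>z\<in>Zin. g z \<in> K z)}"
    then obtain f g where "\<Psi> = (\<lambda>j. f j + proj 1 (\<lambda>i. \<Sum>z\<in>Zin. g z i) j)"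
      and "f \<in> F1minus p q a" and "\<forall>z\<in>Zin. g z \<in> K z"
      by blast
    then show "\<Psi> \<in> M1inf p q a \<inter> Hsq"
      using F1minus_plus_stable_in_M1inf_Hsq[OF reg] unfolding Zin K_def by simp
  qed
  have independent: "\<forall>z\<in>Zin. g z = (\<lambda>_. 0)"
    if "\<forall>z\<in>Zin. g z \<in> K z" and "\<forall>j\<ge>N. (\<Sum>z\<in>Zin. g z j) = 0" for g N
    using stable_sum_eventually_zero[OF reg, of g N] that by (simp add: Zin K_def)
  have direct: "f = (\<lambda>_. 0)"
    if f: "f \<in> F1minus p q a" and g: "\<forall>z\<in>Zin. g z \<in> K z" and fg: "f = proj 1 (\<lambda>i. \<Sum>z\<in>Zin. g z i)" for f g
  proof -
    obtain N where "\<forall>j\<ge>N. f j = 0" using f F1minus_iff by blast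
    then have "\<forall>j\<ge>max N 1. (\<Sum>z\<in>Zin. g z j) = 0" by (auto simp: fg proj_def)
    then have "\<forall>z\<in>Zin. g z = (\<lambda>_. 0)" by (rule independent[OF g])
    then show ?thesis by (simp add: fg proj_def)
  qed
  show ?thesis
  proof (intro conjI allI impI)
    fix g assume "(\<forall>z\<in>Zin. g z \<in> K z) \<and> (\<lambda>i. \<Sum>z\<in>Zin. g z i) = (\<lambda>_. 0)"
    then show "\<forall>z\<in>Zin. g z = (\<lambda>_. 0)"
      using independent[of g 0] by (simp add: fun_eq_iff)
  next
    fix f g assume "f \<in> F1minus p q a \<and> (\<forall>z\<in>Zin. g z \<in> K z) \<and> f = proj 1 (\<lambda>i. \<Sum>z\<in>Zin. g z i)"
    then show "f = (\<lambda>_. 0)"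
      using direct by blast
  qed (rule sum)
qed
end
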